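(* For $\eta=(\eta_1,\dots,\eta_n)\in\mathbb{Z}_{\ge0}^n$ define $$h_\eta(x;q,t)=\prod_{i=1}^nt^{(i-1)\eta_i}\frac{(t;q)_\infty(q^{\eta_i+1};q)_\infty}{(tq^{\eta_i};q)_\infty(q;q)_\infty}\prod_{i<j}\frac{(q^{\eta_i-\eta_j}x_i/x_j;q)_\infty(q^{1-\eta_j}t^{-1}x_i/x_j;q)_\infty(tx_i/x_j;q)_\infty(q^{1+\eta_i}x_i/x_j;q)_\infty}{(q^{-\eta_j}x_i/x_j;q)_\infty(qt^{-1}x_i/x_j;q)_\infty(tq^{\eta_i}x_i/x_j;q)_\infty(q^{1+\eta_i-\eta_j}x_i/x_j;q)_\infty},$$ and define the operator $\mathbf{N}_n^z=\sum_{\eta_1,\dots,\eta_n=0}^\infty z^{|\eta|}h_\eta(x;q,t)\prod_{i=1}^n(T_{q,x_i})^{\eta_i}$, where $|\eta|=\eta_1+\dots+\eta_n$ and $(T_{q,x_i}F)(x_1,\dots,x_n)=F(x_1,\dots,qx_i,\dots,x_n)$. Then $$\mathbf{N}_n^z=\sum_{\eta_1,\dots,\eta_n=0}^\infty z^{|\eta|}\prod_{i<j}\frac{q^{\eta_j}x_j-q^{\eta_i}x_i}{x_j-x_i}\prod_{i,j=1}^n\frac{(tx_i/x_j;q)_{\eta_i}}{(qx_i/x_j;q)_{\eta_i}}\prod_{i=1}^n(T_{q,x_i})^{\eta_i},$$ i.e. for every $\eta\in\mathbb{Z}_{\ge0}^n$, $h_\eta(x;q,t)=\prod_{i<j}\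frac{q^{\eta_j}x_j-q^{\eta_i}x_i}{x_j-x_i}\prod_{i,j}\frac{(tx_i/x_j;q)_{\eta_i}}{(qx_i/x_j;q)_{\eta_i}}$.
   Context: $q,t\in[0,1)$; $(a;q)_\infty=\prod_{i\ge0}(1-aq^i)$ and $(a;q)_m=(1-a)(1-aq)\cdots(1-aq^{m-1})$. The identity is between functions of the formal/complex variables $x_1,\dots,x_n$ (meromorphic functions), coefficientwise in $z$. *)

theory Defs
  imports "HOL-Analysis.Analysis"
begin

definition qpoch_inf :: "complex \<Rightarrow> complex \<Rightarrow> complex" where
  "qpoch_inf a q = prodinf (\<lambda>i. 1 - a * q ^ i)"

definition qpoch :: "complex \<Rightarrow> complex \<Rightarrow> nat \<Rightarrow> complex" where
  "qpoch a q m = (\<Prod>i<m. (1 - a * q ^ i))"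

definition pairs_lt :: "nat \<Rightarrow> (nat \<times> nat) set" where
  "pairs_lt n = {(i, j). i < j \<and> j < n}"

text \<open>The coefficient h_eta(x;q,t); variables x_1..x_n are x 0 .. x (n-1),
  so the factor t^((i-1) eta_i) becomes t^(i * eta i) with 0-based i.\<close>
definition h_eta :: "nat \<Rightarrow> (nat \<Rightarrow> nat) \<Rightarrow> (nat \<Rightarrow> complex) \<Rightarrow> real \<Rightarrow> real \<Rightarrow> complex" where
  "h_eta n \<eta> x q t =
    (let Q = complex_of_real q; T = complex_of_real t in
     (\<Prod>i<n. T ^ (i * \<eta> i) * qpoch_inf T Q * qpoch_inf (Q ^ (\<eta> i + 1)) Q
              / (qpoch_inf (T * Q ^ \<eta> i) Q * qpoch_inf Q Q)) *
     (\<Prod>(i, j)\<in>pairs_lt n.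
        qpoch_inf (Q powi (int (\<eta> i) - int (\<eta> j)) * x i / x j) Q
        * qpoch_inf (Q powi (1 - int (\<eta> j)) / T * x i / x j) Q
        * qpoch_inf (T * x i / x j) Q
        * qpoch_inf (Q ^ (1 + \<eta> i) * x i / x j) Q
      / (qpoch_inf (Q powi (- int (\<eta> j)) * x i / x j) Q
        * qpoch_inf (Q / T * x i / x j) Q
        * qpoch_inf (T * Q ^ \<eta> i * x i / x j) Q
        * qpoch_inf (Q powi (1 + int (\<eta> i) - int (\<eta> j)) * x i / x j) Q)))"

end

theory Submission
  imports Defs
begin

(* Splitting every infinite product as (a;q)_inf = (a;q)_m (a q^m;q)_inf makes all infinite
   products in h_eta cancel, leaving finite q-Pochhammer symbols. Those containing the negative
   power q^(-b) are turned around by the reflection (q^(1-b) w;q)_b = (-w)^b q^(-b(b-1)/2) (1/w;q)_b: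
   for a pair i < j this produces the factor (t x_j/x_i;q)_(eta j) / (q x_j/x_i;q)_(eta j) of the
   opposite ordering together with t^(-eta j), and over all pairs these powers of t cancel the
   prefactor prod_i t^((i-1) eta_i). *)

lemma convergent_prod_qpoch:
  fixes a q :: complex
  assumes "norm q < 1"
  shows "convergent_prod (\<lambda>i. 1 - a * q ^ i)"
proof -
  have "summable (\<lambda>i. norm a * norm q ^ i)"
    using assms by (intro summable_mult summable_geometric) auto
  then have "summable (\<lambda>i. norm ((1 - a * q ^ i) - 1))"
    by (simp add: norm_mult norm_power)
  then show ?thesis
    by (intro abs_convergent_prod_imp_convergent_prod summable_imp_abs_convergent_prod)
qed

lemma qpoch_inf_split:
  fixes a q :: complex
  assumes "norm q < 1"
  shows "qpoch_inf a q = qpoch a q m * qpoch_inf (a * q ^ m) q"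
proof -
  have "(\<lambda>i. 1 - a * q ^ i) has_prod ((\<Prod>k<m. 1 - a * q ^ k) * (\<Prod>k. 1 - a * q ^ (k + m)))"
    by (rule has_prod_ignore_initial_segment'[OF convergent_prod_qpoch[OF assms]])
  moreover have "(\<lambda>k. 1 - a * q ^ (k + m)) = (\<lambda>k. 1 - a * q ^ m * q ^ k)"
    by (auto simp: power_add algebra_simps)
  ultimately show ?thesis
    unfolding qpoch_inf_def qpoch_def using has_prod_unique by metis
qed

lemma qpoch_nonzero_if_qpoch_inf_nonzero:
  fixes a q :: complex
  assumes "norm q < 1" "qpoch_inf a q \<noteq> 0"
  shows "qpoch a q m \<noteq> 0"
  using assms qpoch_inf_split[of q a m] by auto

lemma qpoch_inf_nonzero:
  fixes a q :: complex
  assumes "norm q < 1" "norm a < 1"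
  shows "qpoch_inf a q \<noteq> 0"
  unfolding qpoch_inf_def
proof (intro prodinf_nonzero convergent_prod_qpoch assms)
  fix i
  have "norm (a * q ^ i) \<le> norm a"
    using assms by (simp add: norm_mult norm_power mult_left_le power_le_one)
  then show "1 - a * q ^ i \<noteq> 0"
    using assms(2) by auto
qed

lemma qpoch_add: "qpoch a q (m + k) = qpoch a q m * qpoch (a * q ^ m) q k"
  unfolding qpoch_def
  by (induction k) (simp_all add: power_add mult_ac)

lemma qpoch_reflect:
  fixes c q w :: complex
  assumes c: "c * q ^ b = 1" and "q \<noteq> 0" "w \<noteq> 0"
  shows "qpoch (c * q * w) q b = (- w) ^ b / (\<Prod>k<b. q ^ k) * qpoch (1 / w) q b"
proof -
  have "qpoch (c * q * w) q b = (\<Prod>k<b. 1 - c * q * w * q ^ (b - Suc k))"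
    unfolding qpoch_def by (rule prod.nat_diff_reindex[symmetric])
  also have "\<dots> = (\<Prod>k<b. (- w / q ^ k) * (1 - 1 / w * q ^ k))"
  proof (rule prod.cong[OF refl])
    fix k assume "k \<in> {..<b}"
    then have "q ^ b = q * q ^ (b - Suc k) * q ^ k"
      by (simp flip: power_Suc power_add)
    then have "c * q * q ^ (b - Suc k) = 1 / q ^ k"
      using c assms by (simp add: field_simps)
    then show "1 - c * q * w * q ^ (b - Suc k) = (- w / q ^ k) * (1 - 1 / w * q ^ k)"
      using assms by (simp add: field_simps)
  qed
  also have "\<dots> = (- w) ^ b / (\<Prod>k<b. q ^ k) * qpoch (1 / w) q b"
    unfolding qpoch_def prod.distrib prod_dividef by simp
  finally show ?thesis .
qed

lemma qpoch_cross_ratio: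
  fixes q t u c :: complex
  assumes c: "c * q ^ b = 1" and q0: "q \<noteq> 0" and t0: "t \<noteq> 0" and u0: "u \<noteq> 0"
    and N: "qpoch (c * u) q (a + 1 + b) \<noteq> 0"
  shows "qpoch (t * u) q a * qpoch (c * q / t * u) q b
      / (qpoch (c * u) q a * qpoch (c * q ^ (a + 1) * u) q b)
    = (q ^ b - q ^ a * u) / (1 - u) * (qpoch (t * u) q a / qpoch (q * u) q a)
      * (qpoch (t / u) q b / qpoch (q / u) q b) / t ^ b"
proof -
  define P where "P = (\<Prod>k<b. q ^ k)"
  have P0: "P \<noteq> 0"
    unfolding P_def using q0 by simp
  \<comment> \<open>Comparing two factorizations of \<open>(cu;q)\<^sub>a\<^sub>+\<^sub>1\<^sub>+\<^sub>b\<close> yields the factor \<open>(q^b - q^a u)/(1 - u)\<close>.\<close>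
  have split_a: "qpoch (c * u) q (a + 1 + b)
      = qpoch (c * u) q a * (1 - c * q ^ a * u) * qpoch (c * q ^ (a + 1) * u) q b"
    unfolding qpoch_add by (simp add: qpoch_def mult_ac)
  have split_b: "qpoch (c * u) q (a + 1 + b) = qpoch (c * u) q b * (1 - u) * qpoch (q * u) q a"
  proof -
    have "c * u * q ^ b = u"
      using c by (simp add: mult_ac)
    then have "qpoch (c * u) q (b + (1 + a)) = qpoch (c * u) q b * (qpoch u q 1 * qpoch (u * q) q a)"
      by (simp only: qpoch_add power_one_right)
    then show ?thesis
      by (simp add: qpoch_def add_ac mult_ac)
  qed
  have refl_t: "qpoch (c * q / t * u) q b = (- u) ^ b / (t ^ b * P) * qpoch (t / u) q b"
    using qpoch_reflect[OF c q0, of "u / t"] t0 u0 unfolding P_def minus_divide_left power_divide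
    by (simp add: mult_ac)
  have refl_q: "qpoch (c * u) q b = (- u) ^ b / (q ^ b * P) * qpoch (q / u) q b"
    using qpoch_reflect[OF c q0, of "u / q"] q0 u0 unfolding P_def minus_divide_left power_divide
    by (simp add: mult_ac)
  have nz_a: "qpoch (c * u) q a \<noteq> 0" "1 - c * q ^ a * u \<noteq> 0" "qpoch (c * q ^ (a + 1) * u) q b \<noteq> 0"
    using N unfolding split_a by auto
  have nz_b: "qpoch (q / u) q b \<noteq> 0" "1 - u \<noteq> 0" "qpoch (q * u) q a \<noteq> 0"
    using N unfolding split_b refl_q by auto
  note nz = nz_a nz_b
  have "qpoch (t * u) q a * qpoch (c * q / t * u) q b
      / (qpoch (c * u) q a * qpoch (c * q ^ (a + 1) * u) q b)
    = qpoch (t * u) q a * qpoch (c * q / t * u) q b * (1 - c * q ^ a * u) / qpoch (c * u) q (a + 1 + b)"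
    using nz unfolding split_a by (simp add: field_simps)
  also have "\<dots> = qpoch (t * u) q a * qpoch (t / u) q b * (q ^ b * (1 - c * q ^ a * u))
      / (t ^ b * qpoch (q / u) q b * (1 - u) * qpoch (q * u) q a)"
    unfolding split_b refl_t refl_q using nz P0 q0 t0 u0 by (simp add: mult_ac)
  also have "q ^ b * (1 - c * q ^ a * u) = q ^ b - q ^ a * u"
    using c by (simp add: algebra_simps)
  finally show ?thesis
    using nz t0 by (simp add: field_simps)
qed

lemma qpoch_inf_cross_ratio:
  fixes q t u c :: complex
  assumes q: "norm q < 1" "q \<noteq> 0" and c: "c * q ^ b = 1" and t0: "t \<noteq> 0" and u0: "u \<noteq> 0"
    and h1: "qpoch_inf (c * u) q \<noteq> 0" and h2: "qpoch_inf (q / t * u) q \<noteq> 0"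
    and h3: "qpoch_inf (t * q ^ a * u) q \<noteq> 0" and h4: "qpoch_inf (c * q ^ (a + 1) * u) q \<noteq> 0"
  shows "qpoch_inf (c * q ^ a * u) q * qpoch_inf (c * q / t * u) q * qpoch_inf (t * u) q
        * qpoch_inf (q ^ (a + 1) * u) q
      / (qpoch_inf (c * u) q * qpoch_inf (q / t * u) q * qpoch_inf (t * q ^ a * u) q
        * qpoch_inf (c * q ^ (a + 1) * u) q)
    = (q ^ b - q ^ a * u) / (1 - u) * (qpoch (t * u) q a / qpoch (q * u) q a)
      * (qpoch (t / u) q b / qpoch (q / u) q b) / t ^ b"
proof -
  have s1: "qpoch_inf (c * u) q = qpoch (c * u) q a * qpoch_inf (c * q ^ a * u) q"
    using qpoch_inf_split[OF q(1), of "c * u" a] by (simp add: mult_ac)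
  have shift_b: "c * q / t * u * q ^ b = q / t * u" "c * q ^ (a + 1) * u * q ^ b = q ^ (a + 1) * u"
    using c by (simp_all add: field_simps)
  have s2: "qpoch_inf (c * q / t * u) q = qpoch (c * q / t * u) q b * qpoch_inf (q / t * u) q"
    using qpoch_inf_split[OF q(1), of "c * q / t * u" b] unfolding shift_b(1) .
  have s3: "qpoch_inf (t * u) q = qpoch (t * u) q a * qpoch_inf (t * q ^ a * u) q"
    using qpoch_inf_split[OF q(1), of "t * u" a] by (simp add: mult_ac)
  have s4: "qpoch_inf (c * q ^ (a + 1) * u) q = qpoch (c * q ^ (a + 1) * u) q b * qpoch_inf (q ^ (a + 1) * u) q"
    using qpoch_inf_split[OF q(1), of "c * q ^ (a + 1) * u" b] unfolding shift_b(2) .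
  have "qpoch_inf (c * q ^ a * u) q \<noteq> 0" "qpoch_inf (q ^ (a + 1) * u) q \<noteq> 0"
    using h1 h4 unfolding s1 s4 by auto
  then have "qpoch_inf (c * q ^ a * u) q * qpoch_inf (c * q / t * u) q * qpoch_inf (t * u) q
        * qpoch_inf (q ^ (a + 1) * u) q
      / (qpoch_inf (c * u) q * qpoch_inf (q / t * u) q * qpoch_inf (t * q ^ a * u) q
        * qpoch_inf (c * q ^ (a + 1) * u) q)
    = qpoch (t * u) q a * qpoch (c * q / t * u) q b
      / (qpoch (c * u) q a * qpoch (c * q ^ (a + 1) * u) q b)"
    unfolding s1 s2 s3 s4 using h2 h3 by (simp add: field_simps)
  also have "\<dots> = (q ^ b - q ^ a * u) / (1 - u) * (qpoch (t * u) q a / qpoch (q * u) q a)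
      * (qpoch (t / u) q b / qpoch (q / u) q b) / t ^ b"
    by (rule qpoch_cross_ratio[OF c q(2) t0 u0 qpoch_nonzero_if_qpoch_inf_nonzero[OF q(1) h1]])
  finally show ?thesis .
qed

lemma h_eta_pair_factor:
  fixes Q T xi xj :: complex
  assumes Q: "norm Q < 1" "Q \<noteq> 0" and T: "T \<noteq> 0" and x: "xi \<noteq> 0" "xj \<noteq> 0"
    and h1: "qpoch_inf (Q powi (- int b) * xi / xj) Q \<noteq> 0"
    and h2: "qpoch_inf (Q / T * xi / xj) Q \<noteq> 0"
    and h3: "qpoch_inf (T * Q ^ a * xi / xj) Q \<noteq> 0"
    and h4: "qpoch_inf (Q powi (1 + int a - int b) * xi / xj) Q \<noteq> 0"
  shows "qpoch_inf (Q powi (int a - int b) * xi / xj) Q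
        * qpoch_inf (Q powi (1 - int b) / T * xi / xj) Q
        * qpoch_inf (T * xi / xj) Q
        * qpoch_inf (Q ^ (1 + a) * xi / xj) Q
      / (qpoch_inf (Q powi (- int b) * xi / xj) Q
        * qpoch_inf (Q / T * xi / xj) Q
        * qpoch_inf (T * Q ^ a * xi / xj) Q
        * qpoch_inf (Q powi (1 + int a - int b) * xi / xj) Q)
    = (Q ^ b * xj - Q ^ a * xi) / (xj - xi)
      * ((qpoch (T * xi / xj) Q a / qpoch (Q * xi / xj) Q a)
        * (qpoch (T * xj / xi) Q b / qpoch (Q * xj / xi) Q b)) / T ^ b"
proof -
  define c where "c = Q powi (- int b)"
  define u where "u = xi / xj"
  have c: "c * Q ^ b = 1"
    unfolding c_def using Q by (simp add: power_int_minus field_simps)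
  have powers: "Q powi (int a - int b) = c * Q ^ a" "Q powi (1 - int b) = c * Q"
    "Q powi (1 + int a - int b) = c * Q ^ (a + 1)"
    unfolding c_def using Q by (simp_all add: power_int_diff power_int_add power_int_minus field_simps)
  have u: "u \<noteq> 0"
    unfolding u_def using x by simp
  have args: "Q powi (int a - int b) * xi / xj = c * Q ^ a * u"
    "Q powi (1 - int b) / T * xi / xj = c * Q / T * u" "T * xi / xj = T * u"
    "Q ^ (1 + a) * xi / xj = Q ^ (a + 1) * u" "Q powi (- int b) * xi / xj = c * u"
    "Q / T * xi / xj = Q / T * u" "T * Q ^ a * xi / xj = T * Q ^ a * u"
    "Q powi (1 + int a - int b) * xi / xj = c * Q ^ (a + 1) * u"
    "Q * xi / xj = Q * u" "Q * xj / xi = Q / u" "T * xj / xi = T / u"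
    unfolding powers u_def c_def[symmetric] using x by (simp_all add: field_simps)
  have "(Q ^ b * xj - Q ^ a * xi) / (xj - xi) = (Q ^ b - Q ^ a * u) / (1 - u)"
    unfolding u_def using x by (cases "xi = xj") (simp_all add: field_simps)
  then show ?thesis
    using qpoch_inf_cross_ratio[OF Q c T u] h1 h2 h3 h4 unfolding args by (simp add: mult_ac)
qed

lemma h_eta_diagonal_factor:
  fixes Q T :: complex
  assumes Q: "norm Q < 1" and T: "norm T < 1"
  shows "qpoch_inf T Q * qpoch_inf (Q ^ (a + 1)) Q / (qpoch_inf (T * Q ^ a) Q * qpoch_inf Q Q)
    = qpoch T Q a / qpoch Q Q a"
proof -
  have "norm (T * Q ^ a) < 1" "norm (Q ^ (a + 1)) < 1"
    using Q T by (simp_all add: norm_mult norm_power power_le_one mult_le_one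
        le_less_trans[OF mult_right_le_one_le] power_less_one_iff)
  then have "qpoch_inf (T * Q ^ a) Q \<noteq> 0" "qpoch_inf (Q ^ (a + 1)) Q \<noteq> 0"
    using qpoch_inf_nonzero[OF Q] by auto
  moreover have "qpoch_inf T Q = qpoch T Q a * qpoch_inf (T * Q ^ a) Q"
    "qpoch_inf Q Q = qpoch Q Q a * qpoch_inf (Q ^ (a + 1)) Q"
    using qpoch_inf_split[OF Q, of T a] qpoch_inf_split[OF Q, of Q a] by (simp_all add: mult.commute)
  ultimately show ?thesis
    by simp
qed

lemma finite_pairs_lt: "finite (pairs_lt n)"
  by (rule finite_subset[of _ "{..<n} \<times> {..<n}"]) (auto simp: pairs_lt_def)

lemma prod_pairs_lt_Suc:
  "(\<Prod>p\<in>pairs_lt (Suc n). f p) = (\<Prod>p\<in>pairs_lt n. f p) * (\<Prod>i<n. f (i, n))"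
proof -
  have "pairs_lt (Suc n) = pairs_lt n \<union> (\<lambda>i. (i, n)) ` {..<n}"
    "pairs_lt n \<inter> (\<lambda>i. (i, n)) ` {..<n} = {}"
    by (auto simp: pairs_lt_def)
  then show ?thesis
    by (simp add: prod.union_disjoint finite_pairs_lt prod.reindex inj_on_def)
qed

lemma prod_pairs_lt_power:
  fixes T :: "'a :: comm_monoid_mult"
  shows "(\<Prod>(i, j)\<in>pairs_lt n. T ^ e j) = (\<Prod>j<n. T ^ (j * e j))"
  by (induction n) (simp_all add: pairs_lt_def[of 0] prod_pairs_lt_Suc mult.commute flip: power_mult)

lemma prod_square_eq_diagonal_times_pairs:
  fixes R :: "nat \<Rightarrow> nat \<Rightarrow> 'a :: comm_monoid_mult"
  shows "(\<Prod>i<n. \<Prod>j<n. R i j) = (\<Prod>i<n. R i i) * (\<Prod>(i, j)\<in>pairs_lt n. R i j * R j i)"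
  by (induction n) (simp_all add: pairs_lt_def[of 0] prod_pairs_lt_Suc prod.distrib mult_ac)

(* For a pair i < j, the finite product
   (q^(-eta j) x_i/x_j;q)_(eta i + 1 + eta j) divides the infinite product in den1 and contains
   the factors 1 - x_i/x_j, (q x_i/x_j;q)_(eta i) and, up to reflection, (q x_j/x_i;q)_(eta j);
   for i = j, den5 holds since |q| < 1. *)
theorem proposition3p8:
  fixes n :: nat and \<eta> :: "nat \<Rightarrow> nat" and x :: "nat \<Rightarrow> complex" and q t :: real
  assumes q: "0 < q" "q < 1" and t: "0 < t" "t < 1"
    and xnz: "\<And>i. i < n \<Longrightarrow> x i \<noteq> 0"
    and xdist: "\<And>i j. (i, j) \<in> pairs_lt n \<Longrightarrow> x i \<noteq> x j"
    and den1: "\<And>i j. (i, j) \<in> pairs_lt n \<Longrightarrow>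
       qpoch_inf (complex_of_real q powi (- int (\<eta> j)) * x i / x j) (complex_of_real q) \<noteq> 0"
    and den2: "\<And>i j. (i, j) \<in> pairs_lt n \<Longrightarrow>
       qpoch_inf (complex_of_real q / complex_of_real t * x i / x j) (complex_of_real q) \<noteq> 0"
    and den3: "\<And>i j. (i, j) \<in> pairs_lt n \<Longrightarrow>
       qpoch_inf (complex_of_real t * complex_of_real q ^ \<eta> i * x i / x j) (complex_of_real q) \<noteq> 0"
    and den4: "\<And>i j. (i, j) \<in> pairs_lt n \<Longrightarrow>
       qpoch_inf (complex_of_real q powi (1 + int (\<eta> i) - int (\<eta> j)) * x i / x j) (complex_of_real q) \<noteq> 0"
    and den5: "\<And>i j. i < n \<Longrightarrow> j < n \<Longrightarrow>
       qpoch (complex_of_real q * x i / x j) (complex_of_real q) (\<eta> i) \<noteq> 0"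
  shows "h_eta n \<eta> x q t =
    (\<Prod>(i, j)\<in>pairs_lt n.
        (complex_of_real q ^ \<eta> j * x j - complex_of_real q ^ \<eta> i * x i) / (x j - x i)) *
    (\<Prod>i<n. \<Prod>j<n.
        qpoch (complex_of_real t * x i / x j) (complex_of_real q) (\<eta> i)
      / qpoch (complex_of_real q * x i / x j) (complex_of_real q) (\<eta> i))"
proof -
  let ?Q = "complex_of_real q" and ?T = "complex_of_real t"
  define R where "R i j = qpoch (?T * x i / x j) ?Q (\<eta> i) / qpoch (?Q * x i / x j) ?Q (\<eta> i)" for i j
  define V where "V i j = (?Q ^ \<eta> j * x j - ?Q ^ \<eta> i * x i) / (x j - x i)" for i j
  have QT: "norm ?Q < 1" "?Q \<noteq> 0" "norm ?T < 1" "?T \<noteq> 0"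
    using q t by auto
  have "h_eta n \<eta> x q t = (\<Prod>i<n. ?T ^ (i * \<eta> i) * R i i)
      * (\<Prod>(i, j)\<in>pairs_lt n. V i j * (R i j * R j i) / ?T ^ \<eta> j)"
    unfolding h_eta_def Let_def
    apply (intro arg_cong2[where f = "(*)"] prod.cong refl; clarify)
    subgoal for i
      using h_eta_diagonal_factor[OF QT(1,3)] xnz
      by (simp add: R_def mult.assoc flip: times_divide_eq_right)
    subgoal for i j
      using xnz[of i] xnz[of j] unfolding R_def V_def
      by (intro h_eta_pair_factor QT den1 den2 den3 den4) (auto simp: pairs_lt_def)
    done
  also have "\<dots> = (\<Prod>(i, j)\<in>pairs_lt n. V i j) * (\<Prod>i<n. \<Prod>j<n. R i j)"
  proof -
    have "(\<Prod>(i, j)\<in>pairs_lt n. V i j * (R i j * R j i) / ?T ^ \<eta> j)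
      = (\<Prod>(i, j)\<in>pairs_lt n. V i j) * (\<Prod>(i, j)\<in>pairs_lt n. R i j * R j i)
        / (\<Prod>i<n. ?T ^ (i * \<eta> i))"
      unfolding prod_pairs_lt_power[symmetric] by (simp add: prod.distrib prod_dividef case_prod_beta)
    then show ?thesis
      using QT(4) by (simp add: prod.distrib prod_square_eq_diagonal_times_pairs field_simps)
  qed
  finally show ?thesis
    unfolding V_def R_def .
qed

end
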